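(* Let $k$ be a field of characteristic $0$, $B$ a $k$-algebra, $A$ a $B$-algebra equipped with a $B$-linear double bracket $\{\!\{-,-\}\!\}$, and let $e\in B$ be an idempotent with $BeB=B$. Write $1=\sum_ip_ieq_i$ with $p_i,q_i\in B$ and define $\operatorname{Tr}:A\to eAe$, $\operatorname{Tr}(a)=\sum_ieq_iap_ie$. Then for all $a,b\in A$, \[\operatorname{Tr}\{a,b\}=\{\operatorname{Tr}(a),\operatorname{Tr}(b)\},\] where $\{x,y\}=\{\!\{x,y\}\!\}'\{\!\{x,y\}\!\}''$ is the associated bracket.
   Context: A $B$-algebra is a $k$-algebra $A$ with a $k$-algebra map $B\to A$. Unadorned tensor products are over $k$; $x\in A\otimes A$ is written $x'\otimes x''$ (summation suppressed), $x^\circ=x''\otimes x'$. A double bracket on $A$ is a bilinear map $\{\!\{-,-\}\!\}:A\times A\to A\otimes A$ with $\{\!\{a,bc\}\!\}=b\{\!\{a,c\}\!\}+\{\!\{a,b\}\!\}c$ (outer bimodule structure $b(x\otimes y)c=bx\otimes yc$) and $\{\!\{a,b\}\!\}=-\{\!\{b,a\}\!\}^\circ$; it is $B$-linear if it vanishes whenever its second argument lies in the image of $B$. *)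

theory Defs
  imports Main "HOL.Vector_Spaces"
begin

definition k_algebra :: "('k::field \<Rightarrow> 'a::ring_1 \<Rightarrow> 'a) \<Rightarrow> bool" where
  "k_algebra sc \<longleftrightarrow> vector_space sc \<and>
     (\<forall>s x y. sc s (x * y) = sc s x * y \<and> sc s (x * y) = x * sc s y)"

definition k_alg_hom ::
  "('k::field \<Rightarrow> 'b::ring_1 \<Rightarrow> 'b) \<Rightarrow> ('k \<Rightarrow> 'a::ring_1 \<Rightarrow> 'a) \<Rightarrow> ('b \<Rightarrow> 'a) \<Rightarrow> bool" where
  "k_alg_hom sB sA f \<longleftrightarrow> Vector_Spaces.linear sB sA f \<and> f 1 = 1 \<and> (\<forall>x y. f (x * y) = f x * f y)"

text \<open>A \<otimes>_k A is realised as the free k-vector space on A \<times> A (finitely supported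
  functions A \<times> A \<Rightarrow> k) modulo the subspace tensor_rel generated by the bilinearity
  relations. Elements of A \<otimes> A are represented by elements of the free space, and equality
  in A \<otimes> A is the relation teq (difference lies in tensor_rel).\<close>

definition fsupp :: "('a \<times> 'a \<Rightarrow> 'k::zero) \<Rightarrow> ('a \<times> 'a) set" where
  "fsupp f = {p. f p \<noteq> 0}"

definition tdelta :: "'a \<Rightarrow> 'a \<Rightarrow> ('a \<times> 'a \<Rightarrow> 'k::{zero,one})" where
  "tdelta u v = (\<lambda>p. if p = (u, v) then 1 else 0)"

definition tscale :: "'k::times \<Rightarrow> ('a \<times> 'a \<Rightarrow> 'k) \<Rightarrow> ('a \<times> 'a \<Rightarrow> 'k)" where
  "tscale s f = (\<lambda>p. s * f p)"

definition tadd :: "('a \<times> 'a \<Rightarrow> 'k::plus) \<Rightarrow> ('a \<times> 'a \<Rightarrow> 'k) \<Rightarrow> ('a \<times> 'a \<Rightarrow> 'k)" where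
  "tadd f g = (\<lambda>p. f p + g p)"

definition tzero :: "'a \<times> 'a \<Rightarrow> 'k::zero" where
  "tzero = (\<lambda>p. 0)"

inductive_set tensor_rel :: "('k::field \<Rightarrow> 'a::ring_1 \<Rightarrow> 'a) \<Rightarrow> ('a \<times> 'a \<Rightarrow> 'k) set"
  for sA :: "'k::field \<Rightarrow> 'a::ring_1 \<Rightarrow> 'a" where
  zero: "tzero \<in> tensor_rel sA"
| add: "f \<in> tensor_rel sA \<Longrightarrow> g \<in> tensor_rel sA \<Longrightarrow> tadd f g \<in> tensor_rel sA"
| scale: "f \<in> tensor_rel sA \<Longrightarrow> tscale s f \<in> tensor_rel sA"
| addl: "(\<lambda>p. tdelta (x + x') y p - tdelta x y p - tdelta x' y p) \<in> tensor_rel sA"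
| addr: "(\<lambda>p. tdelta x (y + y') p - tdelta x y p - tdelta x y' p) \<in> tensor_rel sA"
| scalel: "(\<lambda>p. tdelta (sA s x) y p - s * tdelta x y p) \<in> tensor_rel sA"
| scaler: "(\<lambda>p. tdelta x (sA s y) p - s * tdelta x y p) \<in> tensor_rel sA"

definition teq :: "('k::field \<Rightarrow> 'a::ring_1 \<Rightarrow> 'a) \<Rightarrow> ('a \<times> 'a \<Rightarrow> 'k) \<Rightarrow> ('a \<times> 'a \<Rightarrow> 'k) \<Rightarrow> bool" where
  "teq sA f g \<longleftrightarrow> (\<lambda>p. f p - g p) \<in> tensor_rel sA"

text \<open>Outer bimodule structure: b (x \<otimes> y) = bx \<otimes> y and (x \<otimes> y) c = x \<otimes> yc,
  extended linearly.\<close>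
definition tlmult :: "'a::ring_1 \<Rightarrow> ('a \<times> 'a \<Rightarrow> 'k::field) \<Rightarrow> ('a \<times> 'a \<Rightarrow> 'k)" where
  "tlmult c f = (\<lambda>q. \<Sum>p\<in>fsupp f. f p * tdelta (c * fst p) (snd p) q)"

definition trmult :: "('a::ring_1 \<times> 'a \<Rightarrow> 'k::field) \<Rightarrow> 'a \<Rightarrow> ('a \<times> 'a \<Rightarrow> 'k)" where
  "trmult f c = (\<lambda>q. \<Sum>p\<in>fsupp f. f p * tdelta (fst p) (snd p * c) q)"

definition tflip :: "('a \<times> 'a \<Rightarrow> 'k) \<Rightarrow> ('a \<times> 'a \<Rightarrow> 'k)" where
  "tflip f = (\<lambda>(u, v). f (v, u))"

definition tmult :: "('k::field \<Rightarrow> 'a::ring_1 \<Rightarrow> 'a) \<Rightarrow> ('a \<times> 'a \<Rightarrow> 'k) \<Rightarrow> 'a" where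
  "tmult sA f = (\<Sum>p\<in>fsupp f. sA (f p) (fst p * snd p))"

definition double_bracket ::
  "('k::field \<Rightarrow> 'a::ring_1 \<Rightarrow> 'a) \<Rightarrow> ('a \<Rightarrow> 'a \<Rightarrow> ('a \<times> 'a \<Rightarrow> 'k)) \<Rightarrow> bool" where
  "double_bracket sA D \<longleftrightarrow>
     (\<forall>a b. finite (fsupp (D a b))) \<and>
     (\<forall>a a' b. teq sA (D (a + a') b) (tadd (D a b) (D a' b))) \<and>
     (\<forall>a b b'. teq sA (D a (b + b')) (tadd (D a b) (D a b'))) \<and>
     (\<forall>s a b. teq sA (D (sA s a) b) (tscale s (D a b))) \<and>
     (\<forall>s a b. teq sA (D a (sA s b)) (tscale s (D a b))) \<and>
     (\<forall>a b c. teq sA (D a (b * c)) (tadd (tlmult b (D a c)) (trmult (D a b) c))) \<and>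
     (\<forall>a b. teq sA (D a b) (tscale (-1) (tflip (D b a))))"

text \<open>B-linearity: the bracket vanishes (in A \<otimes> A) when its second argument is in the image of B.\<close>
definition B_linear_dbr ::
  "('k::field \<Rightarrow> 'a::ring_1 \<Rightarrow> 'a) \<Rightarrow> ('b \<Rightarrow> 'a) \<Rightarrow> ('a \<Rightarrow> 'a \<Rightarrow> ('a \<times> 'a \<Rightarrow> 'k)) \<Rightarrow> bool" where
  "B_linear_dbr sA \<phi> D \<longleftrightarrow> (\<forall>a c. teq sA (D a (\<phi> c)) tzero)"

definition assoc_bracket ::
  "('k::field \<Rightarrow> 'a::ring_1 \<Rightarrow> 'a) \<Rightarrow> ('a \<Rightarrow> 'a \<Rightarrow> ('a \<times> 'a \<Rightarrow> 'k)) \<Rightarrow> 'a \<Rightarrow> 'a \<Rightarrow> 'a" where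
  "assoc_bracket sA D x y = tmult sA (D x y)"

end

(*
  Put t_i = e q_i and s_i = p_i e, so that Tr x = \<Sum>_i t_i x s_i with all t_i, s_i in the image
  of B, and \<Sum>_i s_i t_i = \<Sum>_i p_i e q_i = 1 by idempotence of e. B-linearity and the Leibniz
  rule make the double bracket an outer bimodule map in its second argument, and cyclic
  skew-symmetry transports this to the first one:
    {{t_i a s_i, t_j b s_j}} = t_j {{a,b}}' s_i \<otimes> t_i {{a,b}}'' s_j.
  Multiplying out and summing over i collapses the middle factor s_i t_i to 1, which leaves
  \<Sum>_j t_j {a,b} s_j = Tr {a,b}.
*)

theory Submission
  imports Defs
begin

(* A double bracket is only given by representatives in the free space on A \<times> A, so it is
   always evaluated through the linear extension of a k-bilinear map H, which is well defined
   on A \<otimes> A by tensor_lift_teq; the associated bracket is the case H = multiplication. *)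

definition tensor_lift :: "('k::field \<Rightarrow> 'a::ring_1 \<Rightarrow> 'a) \<Rightarrow> ('a \<times> 'a \<Rightarrow> 'a) \<Rightarrow> ('a \<times> 'a \<Rightarrow> 'k) \<Rightarrow> 'a" where
  "tensor_lift sA H f = (\<Sum>p\<in>fsupp f. sA (f p) (H p))"

definition k_bilinear :: "('k::field \<Rightarrow> 'a::ring_1 \<Rightarrow> 'a) \<Rightarrow> ('a \<times> 'a \<Rightarrow> 'a) \<Rightarrow> bool" where
  "k_bilinear sA H \<longleftrightarrow>
     (\<forall>x x' y. H (x + x', y) = H (x, y) + H (x', y)) \<and>
     (\<forall>x y y'. H (x, y + y') = H (x, y) + H (x, y')) \<and>
     (\<forall>s x y. H (sA s x, y) = sA s (H (x, y))) \<and>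
     (\<forall>s x y. H (x, sA s y) = sA s (H (x, y)))"

lemma tmult_eq_tensor_lift: "tmult sA f = tensor_lift sA (\<lambda>(x, y). x * y) f"
  by (simp add: tmult_def tensor_lift_def case_prod_beta)

lemma k_bilinear_swap: "k_bilinear sA H \<Longrightarrow> k_bilinear sA (\<lambda>(x, y). H (y, x))"
  by (simp add: k_bilinear_def)

lemma fsupp_tdelta: "fsupp (tdelta u v :: 'a \<times> 'a \<Rightarrow> 'k::zero_neq_one) = {(u, v)}"
  by (auto simp: fsupp_def tdelta_def)

lemma fsupp_tzero [simp]: "fsupp tzero = {}"
  by (simp add: fsupp_def tzero_def)

lemma finite_fsupp_tdelta [simp]: "finite (fsupp (tdelta u v :: 'a \<times> 'a \<Rightarrow> 'k::zero_neq_one))"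
  by (simp add: fsupp_tdelta)

lemma finite_fsupp_add [simp]:
  "finite (fsupp f) \<Longrightarrow> finite (fsupp g) \<Longrightarrow> finite (fsupp (\<lambda>q. f q + g q :: 'k::monoid_add))"
  by (rule finite_subset[of _ "fsupp f \<union> fsupp g"]) (auto simp: fsupp_def)

lemma finite_fsupp_diff [simp]:
  "finite (fsupp f) \<Longrightarrow> finite (fsupp g) \<Longrightarrow> finite (fsupp (\<lambda>q. f q - g q :: 'k::ab_group_add))"
  by (rule finite_subset[of _ "fsupp f \<union> fsupp g"]) (auto simp: fsupp_def)

lemma fsupp_uminus [simp]: "fsupp (\<lambda>q. - f q :: 'k::group_add) = fsupp f"
  by (simp add: fsupp_def)

lemma finite_fsupp_scale [simp]:
  "finite (fsupp f) \<Longrightarrow> finite (fsupp (\<lambda>q. s * f q :: 'k::mult_zero))"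
  by (rule finite_subset[of _ "fsupp f"]) (auto simp: fsupp_def)

lemma finite_fsupp_sum [simp]:
  "finite I \<Longrightarrow> (\<And>i. i \<in> I \<Longrightarrow> finite (fsupp (f i))) \<Longrightarrow> finite (fsupp (\<lambda>q. \<Sum>i\<in>I. f i q))"
  by (rule finite_subset[of _ "\<Union>i\<in>I. fsupp (f i)"]) (auto simp: fsupp_def intro: sum.neutral)

lemma finite_fsupp_tlmult [simp]: "finite (fsupp f) \<Longrightarrow> finite (fsupp (tlmult c f))"
  by (simp add: tlmult_def)

lemma finite_fsupp_trmult [simp]: "finite (fsupp f) \<Longrightarrow> finite (fsupp (trmult f c))"
  by (simp add: trmult_def)

lemma fsupp_tflip: "fsupp (tflip f) = prod.swap ` fsupp f"
  by (auto simp: fsupp_def tflip_def image_iff)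

lemma finite_fsupp_tflip [simp]: "finite (fsupp f) \<Longrightarrow> finite (fsupp (tflip f))"
  by (simp add: fsupp_tflip)

locale tensor_square =
  fixes sA :: "'k::field \<Rightarrow> 'a::ring_1 \<Rightarrow> 'a"
  assumes vector_space: "vector_space sA"
begin

interpretation V: vector_space sA by (rule vector_space)

lemma tensor_lift_superset:
  assumes "finite S" "fsupp f \<subseteq> S"
  shows "tensor_lift sA H f = (\<Sum>p\<in>S. sA (f p) (H p))"
  unfolding tensor_lift_def
  by (rule sum.mono_neutral_left) (use assms in \<open>auto simp: fsupp_def\<close>)

lemma tensor_lift_add:
  assumes "finite (fsupp f)" "finite (fsupp g)"
  shows "tensor_lift sA H (\<lambda>q. f q + g q) = tensor_lift sA H f + tensor_lift sA H g"
proof -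
  let ?S = "fsupp f \<union> fsupp g"
  have "fsupp (\<lambda>q. f q + g q) \<subseteq> ?S" "fsupp f \<subseteq> ?S" "fsupp g \<subseteq> ?S"
    by (auto simp: fsupp_def)
  then show ?thesis
    using assms by (simp add: tensor_lift_superset[of ?S] V.scale_left_distrib sum.distrib)
qed

lemma tensor_lift_diff:
  assumes "finite (fsupp f)" "finite (fsupp g)"
  shows "tensor_lift sA H (\<lambda>q. f q - g q) = tensor_lift sA H f - tensor_lift sA H g"
proof -
  let ?S = "fsupp f \<union> fsupp g"
  have "fsupp (\<lambda>q. f q - g q) \<subseteq> ?S" "fsupp f \<subseteq> ?S" "fsupp g \<subseteq> ?S"
    by (auto simp: fsupp_def)
  then show ?thesis
    using assms by (simp add: tensor_lift_superset[of ?S] V.scale_left_diff_distrib sum_subtractf)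
qed

lemma tensor_lift_scale:
  assumes "finite (fsupp f)"
  shows "tensor_lift sA H (\<lambda>q. s * f q) = sA s (tensor_lift sA H f)"
proof -
  have "fsupp (\<lambda>q. s * f q) \<subseteq> fsupp f"
    by (auto simp: fsupp_def)
  then show ?thesis
    using assms by (simp add: tensor_lift_superset[of "fsupp f"] V.scale_sum_right)
qed

lemma tensor_lift_tdelta [simp]: "tensor_lift sA H (tdelta u v) = H (u, v)"
  unfolding tensor_lift_def fsupp_tdelta by (simp add: tdelta_def)

lemma tensor_lift_zero [simp]: "tensor_lift sA H (\<lambda>q. 0) = 0"
  by (simp add: tensor_lift_def fsupp_def)

lemma tensor_lift_tzero [simp]: "tensor_lift sA H tzero = 0"
  by (simp add: tzero_def)

lemma tensor_lift_sum:
  assumes "finite I" "\<And>i. i \<in> I \<Longrightarrow> finite (fsupp (f i))"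
  shows "tensor_lift sA H (\<lambda>q. \<Sum>i\<in>I. f i q) = (\<Sum>i\<in>I. tensor_lift sA H (f i))"
  using assms by (induction I rule: finite_induct) (simp_all add: tensor_lift_add)

lemma tensor_lift_tlmult:
  assumes "finite (fsupp f)"
  shows "tensor_lift sA H (tlmult c f) = tensor_lift sA (\<lambda>(x, y). H (c * x, y)) f"
  using assms by (simp add: tlmult_def tensor_lift_sum tensor_lift_scale)
    (simp add: tensor_lift_def case_prod_beta)

lemma tensor_lift_trmult:
  assumes "finite (fsupp f)"
  shows "tensor_lift sA H (trmult f c) = tensor_lift sA (\<lambda>(x, y). H (x, y * c)) f"
  using assms by (simp add: trmult_def tensor_lift_sum tensor_lift_scale)
    (simp add: tensor_lift_def case_prod_beta)

lemma tensor_lift_tflip: "tensor_lift sA H (tflip f) = tensor_lift sA (\<lambda>(x, y). H (y, x)) f"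
  unfolding tensor_lift_def fsupp_tflip
  by (subst sum.reindex) (auto simp: tflip_def case_prod_beta prod.swap_def)

lemma tensor_lift_uminus: "tensor_lift sA H (\<lambda>q. - f q) = - tensor_lift sA H f"
  by (simp add: tensor_lift_def sum_negf)

lemma tensor_lift_sum_map:
  "tensor_lift sA (\<lambda>p. \<Sum>i\<in>I. G i p) f = (\<Sum>i\<in>I. tensor_lift sA (G i) f)"
  unfolding tensor_lift_def V.scale_sum_right by (rule sum.swap)

lemma tensor_rel_lift_zero:
  assumes "r \<in> tensor_rel sA" "k_bilinear sA H"
  shows "finite (fsupp r) \<and> tensor_lift sA H r = 0"
  using assms(1)
proof (induction rule: tensor_rel.induct)
  case (add f g)
  then show ?case by (simp add: tadd_def tensor_lift_add)
next
  case (scale f s)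
  then show ?case by (simp add: tscale_def tensor_lift_scale)
qed (use assms(2) in \<open>simp_all add: tensor_lift_diff tensor_lift_scale k_bilinear_def\<close>)

lemma tensor_lift_teq:
  assumes "teq sA f g" "finite (fsupp f)" "finite (fsupp g)" "k_bilinear sA H"
  shows "tensor_lift sA H f = tensor_lift sA H g"
  using tensor_rel_lift_zero[of "\<lambda>q. f q - g q" H] assms
  by (simp add: teq_def tensor_lift_diff)

end

locale double_bracket_algebra =
  fixes sA :: "'k::field \<Rightarrow> 'a::ring_1 \<Rightarrow> 'a"
    and D :: "'a \<Rightarrow> 'a \<Rightarrow> ('a \<times> 'a \<Rightarrow> 'k)"
    and \<phi> :: "'b \<Rightarrow> 'a"
  assumes k_algebra: "k_algebra sA"
    and double_bracket: "double_bracket sA D"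
    and B_linear: "B_linear_dbr sA \<phi> D"
begin

sublocale tensor_square sA
  using k_algebra unfolding tensor_square_def k_algebra_def by simp

lemma scale_mult_left: "sA s x * y = sA s (x * y)"
  and scale_mult_right: "x * sA s y = sA s (x * y)"
  using k_algebra unfolding k_algebra_def by metis+

lemma k_bilinear_mult: "k_bilinear sA (\<lambda>(x, y). x * y)"
  by (simp add: k_bilinear_def algebra_simps scale_mult_left scale_mult_right)

lemma k_bilinear_conj:
  "k_bilinear sA H \<Longrightarrow> k_bilinear sA (\<lambda>(x, y). H (a * x * b, c * y * d))"
  by (simp add: k_bilinear_def algebra_simps scale_mult_left scale_mult_right)

lemma tensor_lift_conj: "tensor_lift sA (\<lambda>p. c * H p * d) f = c * tensor_lift sA H f * d"
  by (simp add: tensor_lift_def sum_distrib_left sum_distrib_right scale_mult_left scale_mult_right)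

lemma finite_fsupp_bracket [simp]: "finite (fsupp (D x y))"
  using double_bracket unfolding double_bracket_def by blast

lemma bracket_add_left: "teq sA (D (x + x') y) (tadd (D x y) (D x' y))"
  and bracket_add_right: "teq sA (D x (y + y')) (tadd (D x y) (D x y'))"
  and bracket_Leibniz: "teq sA (D x (y * z)) (tadd (tlmult y (D x z)) (trmult (D x y) z))"
  and bracket_skew: "teq sA (D x y) (tscale (-1) (tflip (D y x)))"
  and bracket_B_right: "teq sA (D x (\<phi> c)) tzero"
  using double_bracket B_linear unfolding double_bracket_def B_linear_dbr_def by simp_all

lemma lift_bracket_teq:
  "teq sA (D x y) g \<Longrightarrow> finite (fsupp g) \<Longrightarrow> k_bilinear sA H \<Longrightarrow>
    tensor_lift sA H (D x y) = tensor_lift sA H g"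
  by (simp add: tensor_lift_teq)

context
  fixes H assumes H: "k_bilinear sA H"
begin

lemma lift_bracket_add_left:
  "tensor_lift sA H (D (x + x') y) = tensor_lift sA H (D x y) + tensor_lift sA H (D x' y)"
  by (simp add: lift_bracket_teq[OF bracket_add_left[of x x' y]] H tadd_def tensor_lift_add)

lemma lift_bracket_add_right:
  "tensor_lift sA H (D x (y + y')) = tensor_lift sA H (D x y) + tensor_lift sA H (D x y')"
  by (simp add: lift_bracket_teq[OF bracket_add_right[of x y y']] H tadd_def tensor_lift_add)

lemma lift_bracket_sum_left:
  "finite I \<Longrightarrow> tensor_lift sA H (D (\<Sum>i\<in>I. X i) y) = (\<Sum>i\<in>I. tensor_lift sA H (D (X i) y))"
proof (induction I rule: finite_induct)
  case empty
  show ?case using lift_bracket_add_left[of 0 0 y] by simp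
qed (simp add: lift_bracket_add_left)

lemma lift_bracket_sum_right:
  "finite I \<Longrightarrow> tensor_lift sA H (D x (\<Sum>i\<in>I. Y i)) = (\<Sum>i\<in>I. tensor_lift sA H (D x (Y i)))"
proof (induction I rule: finite_induct)
  case empty
  show ?case using lift_bracket_add_right[of x 0 0] by simp
qed (simp add: lift_bracket_add_right)

lemma lift_bracket_B_right: "tensor_lift sA H (D x (\<phi> c)) = 0"
  by (simp add: lift_bracket_teq[OF bracket_B_right[of x c]] H)

lemma lift_bracket_mult_right:
  "tensor_lift sA H (D x (y * z)) =
    tensor_lift sA (\<lambda>(u, v). H (y * u, v)) (D x z) + tensor_lift sA (\<lambda>(u, v). H (u, v * z)) (D x y)"
  by (simp add: lift_bracket_teq[OF bracket_Leibniz[of x y z]] H tadd_def tensor_lift_add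
      tensor_lift_tlmult tensor_lift_trmult)

lemma lift_bracket_swap:
  "tensor_lift sA H (D x y) = - tensor_lift sA (\<lambda>(u, v). H (v, u)) (D y x)"
proof -
  have "tensor_lift sA H (D x y) = tensor_lift sA H (tscale (-1) (tflip (D y x)))"
    by (rule lift_bracket_teq[OF bracket_skew]) (simp_all add: tscale_def H)
  also have "\<dots> = - tensor_lift sA (\<lambda>(u, v). H (v, u)) (D y x)"
    by (simp add: tscale_def tensor_lift_uminus tensor_lift_tflip)
  finally show ?thesis .
qed

end

lemma lift_bracket_B_bimodule_right:
  assumes H: "k_bilinear sA H"
  shows "tensor_lift sA H (D x (\<phi> c * y * \<phi> d)) =
    tensor_lift sA (\<lambda>(u, v). H (\<phi> c * u, v * \<phi> d)) (D x y)"
proof -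
  have H': "k_bilinear sA (\<lambda>(u, v). H (a * u * b, a' * v * b'))" for a b a' b'
    using k_bilinear_conj[OF H] .
  have "tensor_lift sA H (D x (\<phi> c * y * \<phi> d)) =
      tensor_lift sA (\<lambda>(u, v). H (u, v * \<phi> d)) (D x (\<phi> c * y))"
    using lift_bracket_mult_right[OF H, of x "\<phi> c * y" "\<phi> d"]
      lift_bracket_B_right[OF H'[of "\<phi> c * y" 1 1 1]] by simp
  also have "\<dots> = tensor_lift sA (\<lambda>(u, v). H (\<phi> c * u, v * \<phi> d)) (D x y)"
    using lift_bracket_mult_right[OF H'[of 1 1 1 "\<phi> d"], of x "\<phi> c" y]
      lift_bracket_B_right[OF H'[of 1 1 1 "y * \<phi> d"]] by (simp add: mult.assoc)
  finally show ?thesis .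
qed

lemma lift_bracket_B_bimodule_left:
  assumes H: "k_bilinear sA H"
  shows "tensor_lift sA H (D (\<phi> a * x * \<phi> b) y) =
    tensor_lift sA (\<lambda>(u, v). H (u * \<phi> b, \<phi> a * v)) (D x y)"
proof -
  have Hs: "k_bilinear sA (\<lambda>(u, v). H (v, u))"
    using H by (rule k_bilinear_swap)
  have Hs': "k_bilinear sA (\<lambda>(u, v). H (v * \<phi> b, \<phi> a * u))"
    using k_bilinear_conj[OF Hs, of "\<phi> a" 1 1 "\<phi> b"] by simp
  have "tensor_lift sA H (D (\<phi> a * x * \<phi> b) y) =
      - tensor_lift sA (\<lambda>(u, v). H (v, u)) (D y (\<phi> a * x * \<phi> b))"
    by (rule lift_bracket_swap[OF H])
  also have "\<dots> = - tensor_lift sA (\<lambda>(u, v). H (v * \<phi> b, \<phi> a * u)) (D y x)"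
    by (simp add: lift_bracket_B_bimodule_right[OF Hs])
  also have "\<dots> = tensor_lift sA (\<lambda>(u, v). H (u * \<phi> b, \<phi> a * v)) (D x y)"
    by (simp add: lift_bracket_swap[OF Hs', of y x])
  finally show ?thesis .
qed

lemma lift_bracket_B_bimodule:
  assumes H: "k_bilinear sA H"
  shows "tensor_lift sA H (D (\<phi> a * x * \<phi> b) (\<phi> c * y * \<phi> d)) =
    tensor_lift sA (\<lambda>(u, v). H (\<phi> c * u * \<phi> b, \<phi> a * v * \<phi> d)) (D x y)"
proof -
  have "k_bilinear sA (\<lambda>(u, v). H (\<phi> c * u, v * \<phi> d))"
    using k_bilinear_conj[OF H, of "\<phi> c" 1 1 "\<phi> d"] by simp
  then show ?thesis
    by (simp add: lift_bracket_B_bimodule_right[OF H] lift_bracket_B_bimodule_left) (simp add: mult.assoc)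
qed

lemma assoc_bracket_conj_sum:
  assumes I: "finite I" and st: "(\<Sum>i\<in>I. \<phi> (s i) * \<phi> (t i)) = 1"
  shows "assoc_bracket sA D (\<Sum>i\<in>I. \<phi> (t i) * x * \<phi> (s i)) (\<Sum>i\<in>I. \<phi> (t i) * y * \<phi> (s i)) =
    (\<Sum>i\<in>I. \<phi> (t i) * assoc_bracket sA D x y * \<phi> (s i))"
proof -
  let ?m = "\<lambda>(u, v). u * v :: 'a"
  have "assoc_bracket sA D (\<Sum>i\<in>I. \<phi> (t i) * x * \<phi> (s i)) (\<Sum>i\<in>I. \<phi> (t i) * y * \<phi> (s i)) =
      (\<Sum>j\<in>I. \<Sum>i\<in>I. tensor_lift sA ?m (D (\<phi> (t i) * x * \<phi> (s i)) (\<phi> (t j) * y * \<phi> (s j))))"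
    by (simp add: assoc_bracket_def tmult_eq_tensor_lift lift_bracket_sum_left lift_bracket_sum_right
        k_bilinear_mult I)
  also have "\<dots> = (\<Sum>j\<in>I. \<Sum>i\<in>I.
      tensor_lift sA (\<lambda>(u, v). \<phi> (t j) * u * (\<phi> (s i) * \<phi> (t i)) * v * \<phi> (s j)) (D x y))"
    by (simp add: lift_bracket_B_bimodule k_bilinear_mult) (simp add: mult.assoc)
  also have "\<dots> = (\<Sum>j\<in>I. tensor_lift sA (\<lambda>p. \<phi> (t j) * ?m p * \<phi> (s j)) (D x y))"
  proof (rule sum.cong[OF refl])
    fix j
    have collapse: "(\<Sum>i\<in>I. \<phi> (t j) * u * (\<phi> (s i) * \<phi> (t i)) * v * \<phi> (s j)) =
        \<phi> (t j) * (u * v) * \<phi> (s j)" for u v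
    proof -
      have "(\<Sum>i\<in>I. \<phi> (t j) * u * (\<phi> (s i) * \<phi> (t i)) * v * \<phi> (s j)) =
          \<phi> (t j) * u * (\<Sum>i\<in>I. \<phi> (s i) * \<phi> (t i)) * v * \<phi> (s j)"
        by (simp add: sum_distrib_left sum_distrib_right)
      then show ?thesis
        by (simp add: st mult.assoc)
    qed
    show "(\<Sum>i\<in>I. tensor_lift sA (\<lambda>(u, v). \<phi> (t j) * u * (\<phi> (s i) * \<phi> (t i)) * v * \<phi> (s j)) (D x y)) =
        tensor_lift sA (\<lambda>p. \<phi> (t j) * ?m p * \<phi> (s j)) (D x y)"
      unfolding tensor_lift_sum_map[symmetric] by (simp add: case_prod_beta collapse)
  qed
  also have "\<dots> = (\<Sum>j\<in>I. \<phi> (t j) * assoc_bracket sA D x y * \<phi> (s j))"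
    by (simp add: tensor_lift_conj assoc_bracket_def tmult_eq_tensor_lift)
  finally show ?thesis .
qed

end

theorem proposition2p5p7:
  fixes sA :: "'k::field_char_0 \<Rightarrow> 'a::ring_1 \<Rightarrow> 'a"
    and sB :: "'k \<Rightarrow> 'b::ring_1 \<Rightarrow> 'b"
    and \<phi> :: "'b \<Rightarrow> 'a"
    and D :: "'a \<Rightarrow> 'a \<Rightarrow> ('a \<times> 'a \<Rightarrow> 'k)"
    and e :: 'b and n :: nat and p q :: "nat \<Rightarrow> 'b"
    and Tr :: "'a \<Rightarrow> 'a"
  assumes "k_algebra sA" and "k_algebra sB" and "k_alg_hom sB sA \<phi>"
    and "double_bracket sA D" and "B_linear_dbr sA \<phi> D"
    and "e * e = e"
    and "(\<Sum>i<n. p i * e * q i) = 1"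
    and "\<And>x. Tr x = (\<Sum>i<n. \<phi> (e * q i) * x * \<phi> (p i * e))"
  shows "\<forall>a b. Tr (assoc_bracket sA D a b) = assoc_bracket sA D (Tr a) (Tr b)"
proof -
  interpret double_bracket_algebra sA D \<phi>
    using assms(1,4,5) by unfold_locales
  interpret \<phi>: Vector_Spaces.linear sB sA \<phi>
    using assms(3) by (simp add: k_alg_hom_def)
  have \<phi>_mult: "\<phi> (x * y) = \<phi> x * \<phi> y" and \<phi>_one: "\<phi> 1 = 1" for x y
    using assms(3) by (simp_all add: k_alg_hom_def)
  have "\<phi> (p i * e) * \<phi> (e * q i) = \<phi> (p i * e * q i)" for i
    by (metis assms(6) \<phi>_mult mult.assoc)
  then have "(\<Sum>i<n. \<phi> (p i * e) * \<phi> (e * q i)) = 1"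
    by (simp add: \<phi>.sum[symmetric] assms(7) \<phi>_one)
  then show ?thesis
    by (simp add: assms(8) assoc_bracket_conj_sum)
qed

end
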